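(* For every sequence $S\in[n]^m$ there exist a finite set $X\subset\mathbb Q\setminus[n]$ and an offline algorithm in the dynamic BST model with key set $[n]\cup X$ that serves $S$, keeps every element of $[n]$ a leaf of the tree at all times, and has total cost at most $3\,\mathrm{OPT}(S)$.
   Context: Dynamic BST model on a finite key set $K\subset\mathbb Q$: an algorithm chooses an initial BST on $K$. To serve access $s_t$ it touches a set of nodes forming a connected subtree containing the root and $s_t$, may rearrange the touched nodes into any BST shape (untouched subtrees reattached validly), and pays the number of touched nodes. $\mathrm{OPT}(S)$ is the minimum total cost of serving $S$ over all offline algorithms with key set $[n]$. *)

theory Defs
  imports Complex_Main "HOL-Library.Tree"
begin

fun top_closed :: "rat set \<Rightarrow> rat tree \<Rightarrow> bool" where
  "top_closed P Leaf = True"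
| "top_closed P (Node l x r) =
     (if x \<in> P then top_closed P l \<and> top_closed P r
      else set_tree (Node l x r) \<inter> P = {})"

fun hanging :: "rat set \<Rightarrow> rat tree \<Rightarrow> rat tree set" where
  "hanging P Leaf = {}"
| "hanging P (Node l x r) =
     (if x \<in> P then hanging P l \<union> hanging P r else {Node l x r})"

(* One access in the dynamic BST model: T is the current BST, s the accessed key,
   P the set of touched nodes (a connected subtree containing the root and s),
   T' the BST after rearranging the touched nodes; the untouched subtrees are
   reattached unchanged. *)
definition bst_step :: "rat tree \<Rightarrow> rat \<Rightarrow> rat set \<Rightarrow> rat tree \<Rightarrow> bool" where
  "bst_step T s P T' \<longleftrightarrow>
     bst T \<and> s \<in> P \<and> P \<subseteq> set_tree T \<and> top_closed P T \<and>
     bst T' \<and> set_tree T' = set_tree T \<and>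
     (\<forall>h \<in> hanging P T. h \<in> subtrees T')"

(* An (offline) execution serving access sequence S on key set K:
   trees Ts!0 .. Ts!m (Ts!0 the initial BST on K) and touched sets Ps!0 .. Ps!(m-1). *)
definition serves :: "rat set \<Rightarrow> rat list \<Rightarrow> rat tree list \<Rightarrow> rat set list \<Rightarrow> bool" where
  "serves K S Ts Ps \<longleftrightarrow>
     length Ts = Suc (length S) \<and> length Ps = length S \<and>
     bst (Ts ! 0) \<and> set_tree (Ts ! 0) = K \<and>
     (\<forall>i < length S. bst_step (Ts ! i) (S ! i) (Ps ! i) (Ts ! Suc i))"

definition exec_cost :: "rat set list \<Rightarrow> nat" where
  "exec_cost Ps = sum_list (map card Ps)"

definition keys_n :: "nat \<Rightarrow> rat set" where
  "keys_n n = of_nat ` {1..n}"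

definition OPT :: "nat \<Rightarrow> nat list \<Rightarrow> nat" where
  "OPT n S = (LEAST c. \<exists>Ts Ps. serves (keys_n n) (map of_nat S) Ts Ps \<and> exec_cost Ps = c)"

definition is_leaf_key :: "rat \<Rightarrow> rat tree \<Rightarrow> bool" where
  "is_leaf_key k T \<longleftrightarrow> Node Leaf k Leaf \<in> subtrees T"

end

theory Submission
  imports Defs
begin

text \<open>Each integer key \<open>k\<close> is replaced by a gadget of three keys: a node \<open>k + 1/3\<close> whose left
child \<open>k - 1/3\<close> carries \<open>k\<close> as its right child, so that \<open>k\<close> is a leaf; the original left
and right subtrees hang below \<open>k - 1/3\<close> and \<open>k + 1/3\<close>. Since distinct integers differ by
at least 1, this yields a BST. An access touching \<open>P\<close> in the original tree is simulated by
touching both copies of \<open>P\<close> and the leaf of the accessed key, at most \<open>3 |P|\<close> nodes: these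
nodes form a top-closed set, the touched copies are rearranged exactly as \<open>P\<close> was, and every
untouched subtree is either the image of an untouched subtree or a leaf \<open>k\<close> with
\<open>k \<in> P\<close>, which is reattached below the gadget of \<open>k\<close> in the new tree. Applied to an
optimal execution this gives the bound \<open>3 OPT\<close>.\<close>

definition shifted :: "rat set \<Rightarrow> rat set" where
  "shifted K = (\<lambda>k. k - 1/3) ` K \<union> (\<lambda>k. k + 1/3) ` K"

lemma Ints_add_notin_Ints_neq:
  fixes a b d :: rat
  assumes "a \<in> \<int>" "b \<in> \<int>" "d \<notin> \<int>"
  shows "a + d \<noteq> b"
  using assms by (metis Ints_diff add_diff_cancel_left')

lemma Ints_disjoint_shifted:
  assumes "A \<subseteq> \<int>" "B \<subseteq> \<int>"
  shows "A \<inter> shifted B = {}"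
proof -
  have "b + d \<noteq> a" if "a \<in> A" "b \<in> B" "d \<notin> \<int>" for a b d
    using that assms by (intro Ints_add_notin_Ints_neq) blast+
  moreover have "(1/3 :: rat) \<notin> \<int>" "- (1/3 :: rat) \<notin> \<int>"
    by simp_all
  ultimately show ?thesis
    unfolding shifted_def diff_conv_add_uminus by blast
qed

lemma shifted_Int:
  assumes "A \<subseteq> \<int>" "B \<subseteq> \<int>"
  shows "shifted A \<inter> shifted B = shifted (A \<inter> B)"
proof -
  have neq: "a - 1/3 \<noteq> b + 1/3" if "a \<in> \<int>" "b \<in> \<int>" for a b :: rat
  proof
    assume "a - 1/3 = b + 1/3"
    then have "b + 2/3 = a" by linarith
    moreover have "b + 2/3 \<noteq> a"
      using that by (intro Ints_add_notin_Ints_neq) simp_all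
    ultimately show False by contradiction
  qed
  have cross: "(\<lambda>k. k - 1/3) ` A' \<inter> (\<lambda>k. k + 1/3) ` B' = {}"
    if "A' \<subseteq> \<int>" "B' \<subseteq> \<int>" for A' B' :: "rat set"
  proof (rule equals0I)
    fix x assume "x \<in> (\<lambda>k. k - 1/3) ` A' \<inter> (\<lambda>k. k + 1/3) ` B'"
    then obtain a b where "a \<in> A'" "b \<in> B'" "a - 1/3 = b + 1/3"
      by auto
    with that neq[of a b] show False by blast
  qed
  have "shifted A \<inter> shifted B =
      (\<lambda>k. k - 1/3) ` A \<inter> (\<lambda>k. k - 1/3) ` B \<union> (\<lambda>k. k + 1/3) ` A \<inter> (\<lambda>k. k + 1/3) ` B"
    using cross[OF assms] cross[OF assms(2,1)]
    unfolding shifted_def Int_Un_distrib Int_Un_distrib2 by (simp add: Int_commute)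
  also have "\<dots> = shifted (A \<inter> B)"
    unfolding shifted_def by (simp add: image_Int inj_def)
  finally show ?thesis .
qed

lemma shifted_mem_iff:
  assumes "P \<subseteq> \<int>" "k \<in> \<int>"
  shows "k - 1/3 \<in> shifted P \<longleftrightarrow> k \<in> P" "k + 1/3 \<in> shifted P \<longleftrightarrow> k \<in> P"
proof -
  have "shifted {k} \<inter> shifted P = shifted ({k} \<inter> P)"
    using assms by (intro shifted_Int) auto
  then show "k - 1/3 \<in> shifted P \<longleftrightarrow> k \<in> P" "k + 1/3 \<in> shifted P \<longleftrightarrow> k \<in> P"
    unfolding shifted_def by (auto split: if_splits)
qed

lemma Ints_less_imp_add_one_le:
  fixes a b :: rat
  assumes "a \<in> \<int>" "b \<in> \<int>" "a < b"
  shows "a + 1 \<le> b"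
proof -
  obtain i j where "a = of_int i" "b = of_int j"
    using assms(1,2) by (elim Ints_cases)
  then show ?thesis
    using assms(3) by simp
qed

lemma top_closed_if_subset: "set_tree t \<subseteq> P \<Longrightarrow> top_closed P t"
  by (induction t) auto

lemma hanging_if_subset: "set_tree t \<subseteq> P \<Longrightarrow> hanging P t = {}"
  by (induction t) auto

lemma top_closed_if_disjoint: "set_tree t \<inter> P = {} \<Longrightarrow> top_closed P t"
  by (cases t) auto

fun leaf_embed :: "rat tree \<Rightarrow> rat tree" where
  "leaf_embed Leaf = Leaf"
| "leaf_embed (Node l k r) =
     Node (Node (leaf_embed l) (k - 1/3) (Node Leaf k Leaf)) (k + 1/3) (leaf_embed r)"

lemma set_tree_leaf_embed: "set_tree (leaf_embed t) = set_tree t \<union> shifted (set_tree t)"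
  by (induction t) (auto simp: shifted_def)

lemma bst_leaf_embed:
  assumes "bst t" "set_tree t \<subseteq> \<int>"
  shows "bst (leaf_embed t)"
  using assms
proof (induction t)
  case (Node l k r)
  have "x + 1 \<le> k" if "x \<in> set_tree l" for x
    using Node.prems that by (intro Ints_less_imp_add_one_le) auto
  moreover have "k + 1 \<le> x" if "x \<in> set_tree r" for x
    using Node.prems that by (intro Ints_less_imp_add_one_le) auto
  ultimately show ?case
    using Node by (force simp: set_tree_leaf_embed shifted_def)
qed simp

lemma Leaf_in_subtrees_leaf_embed:
  "k \<in> set_tree t \<Longrightarrow> Node Leaf k Leaf \<in> subtrees (leaf_embed t)"
  by (induction t) auto

lemma leaf_embed_in_subtrees_leaf_embed:
  "h \<in> subtrees t \<Longrightarrow> leaf_embed h \<in> subtrees (leaf_embed t)"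
  by (induction t) auto

lemma top_closed_leaf_embed:
  assumes "top_closed P t" "P \<subseteq> \<int>" "set_tree t \<subseteq> \<int>" "s \<in> P"
  shows "top_closed (insert s (shifted P)) (leaf_embed t)"
  using assms
proof (induction t)
  case (Node l k r)
  show ?case
  proof (cases "k \<in> P")
    case True
    then show ?thesis
      using Node by (auto simp: shifted_def)
  next
    case False
    let ?t = "Node l k r"
    have disj: "set_tree ?t \<inter> P = {}"
      using Node.prems(1) False by simp
    have "set_tree ?t \<inter> shifted P = {}"
      using Node.prems(2,3) by (intro Ints_disjoint_shifted)
    moreover have "shifted (set_tree ?t) \<inter> shifted P = {}"
      using shifted_Int[of "set_tree ?t" P] Node.prems(2,3) disj by (simp add: shifted_def)
    moreover have "s \<notin> shifted (set_tree ?t)"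
      using Ints_disjoint_shifted[of "{s}" "set_tree ?t"] Node.prems(2-4) by auto
    moreover have "s \<notin> set_tree ?t"
      using disj Node.prems(4) by blast
    ultimately have "set_tree (leaf_embed ?t) \<inter> insert s (shifted P) = {}"
      unfolding set_tree_leaf_embed by blast
    then show ?thesis
      by (rule top_closed_if_disjoint)
  qed
qed simp

lemma hanging_leaf_embed:
  assumes "P \<subseteq> \<int>" "set_tree t \<subseteq> \<int>" "s \<in> P"
  shows "hanging (insert s (shifted P)) (leaf_embed t)
           \<subseteq> leaf_embed ` hanging P t \<union> {Node Leaf k Leaf | k. k \<in> set_tree t}"
  using assms(2)
proof (induction t)
  case (Node l k r)
  have "s \<notin> shifted {k}"
    using Ints_disjoint_shifted[of "{s}" "{k}"] assms(1,3) Node.prems by auto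
  then have mem: "k - 1/3 \<in> insert s (shifted P) \<longleftrightarrow> k \<in> P"
                 "k + 1/3 \<in> insert s (shifted P) \<longleftrightarrow> k \<in> P"
    using shifted_mem_iff[OF assms(1), of k] Node.prems by (auto simp: shifted_def)
  show ?case
  proof (cases "k \<in> P")
    case True
    then show ?thesis
      using Node mem by (auto split: if_splits)
  next
    case False
    then show ?thesis
      using mem by simp
  qed
qed simp

lemma bst_step_leaf_embed:
  assumes step: "bst_step T s P T'" and ints: "set_tree T \<subseteq> \<int>"
  shows "bst_step (leaf_embed T) s (insert s (shifted P)) (leaf_embed T')"
proof -
  have T: "bst T" "s \<in> P" "P \<subseteq> set_tree T" "top_closed P T"
    and T': "bst T'" "set_tree T' = set_tree T" "\<forall>h \<in> hanging P T. h \<in> subtrees T'"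
    using step unfolding bst_step_def by auto
  have P: "P \<subseteq> \<int>"
    using T(3) ints by blast
  have "h \<in> subtrees (leaf_embed T')"
    if "h \<in> hanging (insert s (shifted P)) (leaf_embed T)" for h
  proof -
    have "h \<in> leaf_embed ` hanging P T \<union> {Node Leaf k Leaf | k. k \<in> set_tree T'}"
      using hanging_leaf_embed[OF P ints T(2)] that T'(2) by blast
    then show ?thesis
      using T'(3) leaf_embed_in_subtrees_leaf_embed Leaf_in_subtrees_leaf_embed by blast
  qed
  moreover have "insert s (shifted P) \<subseteq> set_tree (leaf_embed T)"
    using T(2,3) unfolding set_tree_leaf_embed shifted_def by blast
  moreover have "bst (leaf_embed T)" "bst (leaf_embed T')"
    using T(1) T'(1,2) ints by (simp_all add: bst_leaf_embed)
  moreover have "set_tree (leaf_embed T') = set_tree (leaf_embed T)"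
    using T'(2) by (simp add: set_tree_leaf_embed)
  ultimately show ?thesis
    unfolding bst_step_def using top_closed_leaf_embed[OF T(4) P ints T(2)] by blast
qed

lemma card_insert_shifted_le:
  assumes "finite P" "s \<in> P"
  shows "card (insert s (shifted P)) \<le> 3 * card P"
proof -
  have "card (insert s (shifted P)) \<le> Suc (card (shifted P))"
    using assms(1) by (simp add: card_insert_if shifted_def)
  moreover have "card (shifted P) \<le> card ((\<lambda>k. k - 1/3) ` P) + card ((\<lambda>k. k + 1/3) ` P)"
    unfolding shifted_def by (rule card_Un_le)
  moreover have "card ((\<lambda>k. k - 1/3) ` P) \<le> card P" "card ((\<lambda>k. k + 1/3) ` P) \<le> card P"
    using assms(1) by (simp_all add: card_image_le)
  moreover have "0 < card P"
    using assms card_gt_0_iff by blast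
  ultimately show ?thesis
    by linarith
qed

lemma serves_set_tree:
  assumes sv: "serves K S Ts Ps" and "T \<in> set Ts"
  shows "set_tree T = K"
proof -
  have "set_tree (Ts ! i) = K" if "i \<le> length S" for i
    using that
  proof (induction i)
    case 0
    then show ?case
      using sv by (simp add: serves_def)
  next
    case (Suc i)
    then have "bst_step (Ts ! i) (S ! i) (Ps ! i) (Ts ! Suc i)"
      using sv by (simp add: serves_def)
    then show ?case
      using Suc by (simp add: bst_step_def)
  qed
  moreover obtain i where "i < length Ts" "T = Ts ! i"
    using \<open>T \<in> set Ts\<close> by (auto simp: in_set_conv_nth)
  ultimately show ?thesis
    using sv by (simp add: serves_def)
qed

lemma serves_leaf_embed:
  assumes sv: "serves K S Ts Ps" and K: "K \<subseteq> \<int>"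
  shows "serves (K \<union> shifted K) S (map leaf_embed Ts)
           (map2 (\<lambda>P s. insert s (shifted P)) Ps S)"
proof -
  have len: "length Ts = Suc (length S)" "length Ps = length S"
    and steps: "\<forall>i < length S. bst_step (Ts ! i) (S ! i) (Ps ! i) (Ts ! Suc i)"
    using sv by (auto simp: serves_def)
  have sets: "set_tree T = K" if "T \<in> set Ts" for T
    using serves_set_tree[OF sv that] .
  have "bst_step (leaf_embed (Ts ! i)) (S ! i) (insert (S ! i) (shifted (Ps ! i)))
      (leaf_embed (Ts ! Suc i))" if "i < length S" for i
    using bst_step_leaf_embed steps that sets[of "Ts ! i"] K len by simp
  moreover have "bst (leaf_embed (Ts ! 0))"
    using sv sets[of "Ts ! 0"] K len by (simp add: serves_def bst_leaf_embed)
  ultimately show ?thesis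
    unfolding serves_def using len sets[of "Ts ! 0"] by (simp add: set_tree_leaf_embed)
qed

lemma exec_cost_leaf_embed_le:
  assumes sv: "serves K S Ts Ps"
  shows "exec_cost (map2 (\<lambda>P s. insert s (shifted P)) Ps S) \<le> 3 * exec_cost Ps"
proof -
  have len: "length Ps = length S"
    using sv by (simp add: serves_def)
  have "card (insert (S ! i) (shifted (Ps ! i))) \<le> 3 * card (Ps ! i)" if "i < length S" for i
  proof (rule card_insert_shifted_le)
    have "bst_step (Ts ! i) (S ! i) (Ps ! i) (Ts ! Suc i)"
      using sv that by (simp add: serves_def)
    then show "finite (Ps ! i)" "S ! i \<in> Ps ! i"
      unfolding bst_step_def by (auto intro: finite_subset[OF _ finite_set_tree])
  qed
  then have "(\<Sum>i<length S. card (insert (S ! i) (shifted (Ps ! i))))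
      \<le> (\<Sum>i<length S. 3 * card (Ps ! i))"
    by (intro sum_mono) simp
  then show ?thesis
    unfolding exec_cost_def using len
    by (simp add: sum_list_sum_nth atLeast0LessThan sum_distrib_left)
qed

lemma is_leaf_key_leaf_embed: "k \<in> set_tree T \<Longrightarrow> is_leaf_key k (leaf_embed T)"
  unfolding is_leaf_key_def by (rule Leaf_in_subtrees_leaf_embed)

fun left_spine :: "nat \<Rightarrow> rat tree" where
  "left_spine 0 = Leaf"
| "left_spine (Suc k) = Node (left_spine k) (of_nat (Suc k)) Leaf"

lemma set_tree_left_spine: "set_tree (left_spine n) = keys_n n"
proof (induction n)
  case (Suc n)
  have "{1..Suc n} = insert (Suc n) {1..n}"
    by auto
  then show ?case
    using Suc by (simp add: keys_n_def)
qed (simp add: keys_n_def)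

lemma bst_left_spine: "bst (left_spine n)"
  by (induction n) (auto simp: set_tree_left_spine keys_n_def)

lemma serves_static:
  assumes "bst T" "set S \<subseteq> set_tree T"
  shows "serves (set_tree T) S (replicate (Suc (length S)) T) (replicate (length S) (set_tree T))"
proof -
  have "top_closed (set_tree T) T" "hanging (set_tree T) T = {}"
    by (simp_all add: top_closed_if_subset hanging_if_subset)
  then have "bst_step T (S ! i) (set_tree T) T" if "i < length S" for i
    using assms nth_mem[OF that] by (auto simp: bst_step_def)
  then show ?thesis
    using assms(1) by (simp add: serves_def nth_Cons' del: replicate.simps)
qed

lemma OPT_attained:
  assumes "set S \<subseteq> {1..n}"
  shows "\<exists>Ts Ps. serves (keys_n n) (map of_nat S) Ts Ps \<and> exec_cost Ps = OPT n S"
proof -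
  have "set (map of_nat S) \<subseteq> set_tree (left_spine n)"
    using assms by (auto simp: set_tree_left_spine keys_n_def)
  then have "\<exists>c Ts Ps. serves (keys_n n) (map of_nat S) Ts Ps \<and> exec_cost Ps = c"
    using serves_static[OF bst_left_spine] set_tree_left_spine by metis
  then show ?thesis
    unfolding OPT_def by (rule LeastI_ex)
qed

theorem mainTheorem17:
  fixes n :: nat and S :: "nat list"
  assumes "set S \<subseteq> {1..n}"
  shows "\<exists>X Ts Ps. finite X \<and> X \<inter> keys_n n = {} \<and>
           serves (keys_n n \<union> X) (map of_nat S) Ts Ps \<and>
           (\<forall>T \<in> set Ts. \<forall>k \<in> keys_n n. is_leaf_key k T) \<and>
           exec_cost Ps \<le> 3 * OPT n S"
proof -
  obtain Ts Ps where sv: "serves (keys_n n) (map of_nat S) Ts Ps"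
    and cost: "exec_cost Ps = OPT n S"
    using OPT_attained[OF assms] by blast
  have K: "keys_n n \<subseteq> \<int>"
    unfolding keys_n_def by auto
  show ?thesis
  proof (intro exI conjI)
    show "finite (shifted (keys_n n))"
      by (simp add: shifted_def keys_n_def)
    show "shifted (keys_n n) \<inter> keys_n n = {}"
      using Ints_disjoint_shifted[OF K K] by blast
    show "serves (keys_n n \<union> shifted (keys_n n)) (map of_nat S) (map leaf_embed Ts)
        (map2 (\<lambda>P s. insert s (shifted P)) Ps (map of_nat S))"
      using sv K by (rule serves_leaf_embed)
    show "\<forall>T \<in> set (map leaf_embed Ts). \<forall>k \<in> keys_n n. is_leaf_key k T"
      using serves_set_tree[OF sv] is_leaf_key_leaf_embed by auto
    show "exec_cost (map2 (\<lambda>P s. insert s (shifted P)) Ps (map of_nat S)) \<le> 3 * OPT n S"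
      using exec_cost_leaf_embed_le[OF sv] cost by simp
  qed
qed

end
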